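(* Let $d\geq1$, fix constants $0<\kappa_1\leqslant\kappa_2$, let $N$ be a positive integer and let $E_1,\ldots,E_N$ be pairwise disjoint measurable subsets of $\mathbb{T}^d$ with $\mathbb{T}^{d}=\bigcup_{j=1}^{N}E_{j}$, $|E_{j}|=1/N$ and $\kappa_1N^{-1/d}\leqslant\operatorname{diam}(E_{j})\leqslant\kappa_2N^{-1/d}$. Let $0<\beta\leqslant1$ and let $f$ be a non-negative function on $\mathbb{T}^d$ with $|f(x)-f(y)|\leqslant|x-y|^{\beta}$ for all $x,y\in\mathbb{T}^{d}$. For $0<r<1/2$ let \[ J(N,f,r)=N\int_{E_{1}}\cdots N\int_{E_{N}}\int_{\mathbb{T}^{d}}\left\vert \frac{1}{N}\sum_{j=1}^{N}f(z_{j})\chi_{-x+B_{r}}(z_{j})-\int_{-x+B_{r}}f(y)\,dy\right\vert ^{2}dx\,dz_{1}\cdots dz_{N}. \] Then there is a constant $c>0$, independent of $N$, of the decomposition and of $r$, such that for every $0<r<1/2$, \[ J(N,f,r)\leqslant\begin{cases} c\,N^{-1-2\beta/d} & \text{if }\beta<1/2,\\ c\,N^{-1-1/d} & \text{if }\beta\geqslant1/2.\end{cases} \]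
   Context: $\mathbb{T}^{d}=\mathbb{R}^{d}/\mathbb{Z}^{d}$ is identified with $[-1/2,1/2)^{d}$ with Lebesgue measure $|\cdot|$; $|x|$ is the Euclidean norm of the representative of $x$ in $[-1/2,1/2)^d$, and $|x-y|$ is the induced distance (used also for diameters). $B_{r}=\{x\in\mathbb{T}^{d}:|x|<r\}$, $-x+B_r$ is its translate, and $\chi_G$ is the characteristic function of $G$. The constant $c$ may depend on $d$, $\beta$, $\kappa_1,\kappa_2$ and on $f$ (e.g. through $\Vert f\Vert_2$). *)

theory Defs
  imports "HOL-Analysis.Analysis"
begin

text \<open>The torus T^d = R^d/Z^d, identified with the fundamental cube [-1/2,1/2)^d.\<close>

definition torus_cube :: "(real ^ 'd) set" where
  "torus_cube = {x. \<forall>i. -1/2 \<le> x $ i \<and> x $ i < 1/2}"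

text \<open>Representative of a real number modulo 1 in [-1/2,1/2).\<close>
definition trep :: "real \<Rightarrow> real" where
  "trep t = t - of_int \<lfloor>t + 1/2\<rfloor>"

definition tnorm :: "real ^ 'd \<Rightarrow> real" where
  "tnorm x = norm (\<chi> i. trep (x $ i))"

definition tdist :: "real ^ 'd \<Rightarrow> real ^ 'd \<Rightarrow> real" where
  "tdist x y = tnorm (x - y)"

definition tdiam :: "(real ^ 'd) set \<Rightarrow> real" where
  "tdiam E = (SUP p \<in> E \<times> E. tdist (fst p) (snd p))"

definition tball_transl :: "real ^ 'd \<Rightarrow> real \<Rightarrow> (real ^ 'd) set" where
  "tball_transl x r = {z \<in> torus_cube. tnorm (z + x) < r}"

text \<open>J(N,f,r) as a non-negative (extended) integral; the normalized measures N dz_j on E_j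
  are written as N^N times the indicator of E_0 x ... x E_(N-1).\<close>
definition Jfun :: "nat \<Rightarrow> (nat \<Rightarrow> (real ^ 'd) set) \<Rightarrow> (real ^ 'd \<Rightarrow> real) \<Rightarrow> real \<Rightarrow> ennreal" where
  "Jfun N E f r =
     ennreal (real N ^ N) *
     (\<integral>\<^sup>+ z. (\<Prod>j<N. indicator (E j) (z j)) *
        (\<integral>\<^sup>+ x. ennreal (\<bar>(1 / real N) * (\<Sum>j<N. f (z j) * indicator (tball_transl x r) (z j))
                     - (LINT y:tball_transl x r|lebesgue. f y)\<bar>^2) \<partial>(lebesgue_on torus_cube))
      \<partial>(\<Pi>\<^sub>M j\<in>{..<N}. lebesgue_on torus_cube))"

end

(* For fixed x put g = f * chi(-x + B_r). If z_j is uniform on E_j, independently for each j, then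
   the quantity inside J is the mean of the centred variables g(z_j) - N * integral of g over E_j,
   because the E_j partition the torus into sets of measure 1/N. Its second moment is therefore
   N^(-2) times the sum of the variances, and each variance is at most the squared oscillation of g
   on E_j. As diam E_j <= delta = kappa2 * N^(-1/d), this oscillation is at most delta^beta by the
   Hoelder condition, plus sup f when the sphere bounding -x + B_r passes within delta of E_j, which
   happens only for x in a shell of measure O(delta). Integrating over x gives
   J <= c * N^(-1) * (delta^(2 beta) + delta), and the larger of the two terms is the claimed rate. *)

theory Submission
  imports Defs
begin

section \<open>The torus norm\<close>

lemma trep_bounds: "-1/2 \<le> trep t \<and> trep t < 1/2"
  unfolding trep_def by linarith

lemma abs_trep_le: "\<bar>trep t\<bar> \<le> \<bar>t - of_int m\<bar>"
proof -
  define n where "n = \<lfloor>t + 1/2\<rfloor>"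
  have n: "of_int n \<le> t + 1/2" "t + 1/2 < of_int n + 1" "trep t = t - of_int n"
    unfolding n_def trep_def by linarith+
  consider "m = n" | "m \<ge> n + 1" | "m \<le> n - 1"
    by linarith
  then show ?thesis
  proof cases
    case 2
    then have "real_of_int m \<ge> of_int n + 1"
      by linarith
    then show ?thesis
      using n by linarith
  next
    case 3
    then have "real_of_int m \<le> of_int n - 1"
      by linarith
    then show ?thesis
      using n by linarith
  qed (simp add: n)
qed

lemma tnorm_le_norm_diff_lattice:
  fixes u :: "real ^ 'd"
  shows "tnorm u \<le> norm (u - (\<chi> i. of_int (k i)))"
  unfolding tnorm_def by (rule norm_le_componentwise_cart) (simp add: abs_trep_le)

lemma tnorm_eq_norm_diff_round:
  fixes u :: "real ^ 'd"
  shows "tnorm u = norm (u - (\<chi> i. of_int \<lfloor>u $ i + 1/2\<rfloor>))"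
  unfolding tnorm_def trep_def by (rule arg_cong[where f = norm]) (simp add: vec_eq_iff)

lemma tnorm_le_norm: "tnorm (u :: real ^ 'd) \<le> norm u"
proof -
  have "(\<chi> i. 0) = (0 :: real ^ 'd)"
    by (simp add: vec_eq_iff)
  then show ?thesis
    using tnorm_le_norm_diff_lattice[of u "\<lambda>_. 0"] by simp
qed

lemma tnorm_nonneg: "0 \<le> tnorm u"
  unfolding tnorm_def by simp

lemma tnorm_triangle:
  fixes u v :: "real ^ 'd"
  shows "tnorm (u + v) \<le> tnorm u + tnorm v"
proof -
  define ku where "ku i = \<lfloor>u $ i + 1/2\<rfloor>" for i
  define kv where "kv i = \<lfloor>v $ i + 1/2\<rfloor>" for i
  have "tnorm (u + v) \<le> norm (u + v - (\<chi> i. of_int (ku i + kv i)))"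
    by (rule tnorm_le_norm_diff_lattice)
  also have "u + v - (\<chi> i. of_int (ku i + kv i)) = (u - (\<chi> i. of_int (ku i))) + (v - (\<chi> i. of_int (kv i)))"
    by (simp add: vec_eq_iff)
  also have "norm \<dots> \<le> tnorm u + tnorm v"
    unfolding tnorm_eq_norm_diff_round ku_def kv_def by (rule norm_triangle_ineq)
  finally show ?thesis .
qed

lemma tnorm_minus: "tnorm (- u :: real ^ 'd) = tnorm u"
proof -
  have le: "tnorm (- v) \<le> tnorm v" for v :: "real ^ 'd"
  proof -
    have "tnorm (- v) \<le> norm (- v - (\<chi> i. of_int (- \<lfloor>v $ i + 1/2\<rfloor>)))"
      by (rule tnorm_le_norm_diff_lattice)
    also have "- v - (\<chi> i. of_int (- \<lfloor>v $ i + 1/2\<rfloor>)) = - (v - (\<chi> i. of_int \<lfloor>v $ i + 1/2\<rfloor>))"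
      by (simp add: vec_eq_iff)
    finally show ?thesis
      by (simp only: norm_minus_cancel tnorm_eq_norm_diff_round[of v])
  qed
  show ?thesis
    using le[of u] le[of "- u"] by simp
qed

lemma tdist_commute: "tdist x y = tdist y (x :: real ^ 'd)"
  unfolding tdist_def by (metis minus_diff_eq tnorm_minus)

lemma tnorm_le_card: "tnorm (u :: real ^ 'd) \<le> real CARD('d)"
proof -
  have "tnorm u \<le> (\<Sum>i\<in>UNIV. \<bar>trep (u $ i)\<bar>)"
    unfolding tnorm_def using norm_le_l1_cart[of "\<chi> i. trep (u $ i)"] by simp
  also have "\<dots> \<le> (\<Sum>i\<in>(UNIV::'d set). 1)"
  proof (rule sum_mono)
    show "\<bar>trep (u $ i)\<bar> \<le> 1" for i
      using trep_bounds[of "u $ i"] by auto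
  qed
  finally show ?thesis by simp
qed

lemma tdist_le_tdiam:
  assumes "a \<in> E" "b \<in> E"
  shows "tdist a b \<le> tdiam (E :: (real ^ 'd) set)"
proof -
  have "(\<lambda>p. tdist (fst p) (snd p)) (a, b) \<le> (SUP p\<in>E \<times> E. tdist (fst p) (snd p))"
  proof (rule cSUP_upper)
    show "bdd_above ((\<lambda>p. tdist (fst p) (snd p)) ` (E \<times> E))"
      by (rule bdd_aboveI[of _ "real CARD('d)"]) (auto simp: tdist_def tnorm_le_card)
  qed (use assms in auto)
  then show ?thesis
    unfolding tdiam_def by simp
qed

lemma trep_borel[measurable]: "trep \<in> borel_measurable borel"
  unfolding trep_def[abs_def] by measurable

lemma vec_nth_borel[measurable]: "(\<lambda>x::real ^ 'n. x $ i) \<in> borel_measurable borel"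
  by (intro borel_measurable_continuous_onI continuous_intros)

lemma tnorm_eq_sqrt_sum: "tnorm (x :: real ^ 'd) = sqrt (\<Sum>i\<in>UNIV. (trep (x $ i))\<^sup>2)"
  unfolding tnorm_def norm_vec_def L2_set_def by simp

lemma tnorm_borel[measurable]: "tnorm \<in> borel_measurable (borel :: (real ^ 'd) measure)"
  unfolding tnorm_eq_sqrt_sum[abs_def] by measurable

lemma torus_cube_borel[measurable]: "(torus_cube :: (real ^ 'd) set) \<in> sets borel"
  unfolding torus_cube_def by measurable

lemma zero_in_torus_cube: "0 \<in> torus_cube"
  unfolding torus_cube_def by simp

lemma emeasure_torus_cube: "emeasure lebesgue (torus_cube :: (real ^ 'd) set) = 1"
proof (rule antisym)
  let ?a = "(\<chi> i. -1/2) :: real ^ 'd" and ?b = "(\<chi> i. 1/2) :: real ^ 'd"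
  have "\<bar>(?b - ?a) \<bullet> i\<bar> = 1" if "i \<in> Basis" for i
    using that by (auto simp: Basis_vec_def inner_axis)
  then have vol: "(\<Prod>i\<in>Basis. (?b - ?a) \<bullet> i) = 1"
    by (intro prod.neutral) (auto simp: Basis_vec_def inner_axis)
  have "torus_cube \<subseteq> cbox ?a ?b"
    unfolding torus_cube_def by (auto simp: mem_box_cart less_imp_le)
  then show "emeasure lebesgue (torus_cube :: (real ^ 'd) set) \<le> 1"
    using emeasure_mono[of torus_cube "cbox ?a ?b" lebesgue] vol
    by (simp add: emeasure_lborel_cbox_eq Basis_vec_def inner_axis)
  have "box ?a ?b \<subseteq> torus_cube"
    unfolding torus_cube_def by (auto simp: mem_box_cart less_imp_le)
  then show "1 \<le> emeasure lebesgue (torus_cube :: (real ^ 'd) set)"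
    using emeasure_mono[of "box ?a ?b" torus_cube lebesgue] vol
    by (simp add: emeasure_lborel_box_eq Basis_vec_def inner_axis)
qed

section \<open>Shells\<close>

lemma power_diff_le:
  fixes a b :: real
  assumes "0 \<le> b" "b \<le> a"
  shows "a ^ n - b ^ n \<le> real n * a ^ (n - 1) * (a - b)"
proof (induction n)
  case (Suc n)
  have "a ^ Suc n - b ^ Suc n = a * (a ^ n - b ^ n) + b ^ n * (a - b)"
    by (simp add: algebra_simps)
  also have "\<dots> \<le> a * (real n * a ^ (n - 1) * (a - b)) + a ^ n * (a - b)"
    using assms Suc by (intro add_mono mult_left_mono mult_right_mono power_mono) auto
  also have "\<dots> = real (Suc n) * a ^ n * (a - b)"
    by (cases n) (simp_all add: algebra_simps)
  finally show ?case by simp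
qed simp

lemma measure_annulus_le:
  fixes c :: "'a :: euclidean_space"
  assumes "0 \<le> r" "0 \<le> \<delta>" "r + \<delta> \<le> R"
  shows "measure lebesgue (ball c (r + \<delta>) - ball c (r - \<delta>))
           \<le> 2 * DIM('a) * unit_ball_vol DIM('a) * R ^ (DIM('a) - 1) * \<delta>"
proof -
  define a where "a = r + \<delta>"
  define b where "b = max 0 (r - \<delta>)"
  let ?n = "DIM('a)" and ?w = "unit_ball_vol DIM('a)"
  have ab: "0 \<le> b" "b \<le> a" "a - b \<le> 2 * \<delta>" "a \<le> R"
    using assms unfolding a_def b_def by auto
  have "ball c (r - \<delta>) = ball c b"
    unfolding b_def by (cases "r - \<delta> \<le> 0") auto
  then have "measure lebesgue (ball c (r + \<delta>) - ball c (r - \<delta>))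
      = measure lebesgue (ball c a - ball c b)"
    by (simp add: a_def)
  also have "\<dots> = measure lebesgue (ball c a) - measure lebesgue (ball c b)"
    using ab by (intro measurable_measure_Diff) auto
  also have "\<dots> = ?w * (a ^ ?n - b ^ ?n)"
    using ab by (simp add: content_ball algebra_simps)
  also have "\<dots> \<le> ?w * (real ?n * a ^ (?n - 1) * (a - b))"
    using ab by (intro mult_left_mono power_diff_le) (auto simp: unit_ball_vol_nonneg)
  also have "\<dots> \<le> ?w * (real ?n * R ^ (?n - 1) * (2 * \<delta>))"
    using ab by (intro mult_left_mono mult_mono power_mono) (auto simp: unit_ball_vol_nonneg)
  finally show ?thesis
    by (simp add: algebra_simps)
qed

text \<open>The translations x for which p lies within distance \<delta> of the sphere bounding -x + B_r.\<close>
definition tshell :: "real ^ 'd \<Rightarrow> real \<Rightarrow> real \<Rightarrow> (real ^ 'd) set" where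
  "tshell p r \<delta> = {x \<in> torus_cube. r - \<delta> \<le> tnorm (p + x) \<and> tnorm (p + x) < r + \<delta>}"

lemma tshell_borel[measurable]: "tshell p r \<delta> \<in> sets borel"
  unfolding tshell_def by measurable

lemma tshell_subset_torus_cube: "tshell p r \<delta> \<subseteq> torus_cube"
  unfolding tshell_def by auto

definition tshell_constant :: "nat \<Rightarrow> real \<Rightarrow> real" where
  "tshell_constant d R = 3 ^ d * (2 * d * unit_ball_vol d * R ^ (d - 1))"

lemma tshell_constant_nonneg: "0 \<le> R \<Longrightarrow> 0 \<le> tshell_constant d R"
  unfolding tshell_constant_def by (simp add: unit_ball_vol_nonneg)

text \<open>For p and x in the cube, the lattice point nearest to p + x has coordinates in {-1, 0, 1}.\<close>
lemma tshell_subset_annuli: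
  assumes p: "p \<in> torus_cube"
  shows "tshell p r \<delta> \<subseteq> (\<Union>k \<in> UNIV \<rightarrow>\<^sub>E {-1, 0, 1}.
            ball ((\<chi> i. of_int (k i)) - p) (r + \<delta>) - ball ((\<chi> i. of_int (k i)) - p) (r - \<delta>))"
proof
  fix x assume x: "x \<in> tshell p r \<delta>"
  define k where "k i = \<lfloor>(p + x) $ i + 1/2\<rfloor>" for i
  have "k i \<in> {-1, 0, 1}" for i
  proof -
    have "-1/2 \<le> p $ i" "p $ i < 1/2" "-1/2 \<le> x $ i" "x $ i < 1/2"
      using p x unfolding tshell_def torus_cube_def by auto
    then have "-1 \<le> k i \<and> k i \<le> 1"
      unfolding k_def by (simp only: vector_add_component) linarith
    then show ?thesis by auto
  qed
  then have "k \<in> UNIV \<rightarrow>\<^sub>E {-1, 0, 1}"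
    by auto
  moreover have "tnorm (p + x) = dist x ((\<chi> i. of_int (k i)) - p)"
    unfolding tnorm_eq_norm_diff_round[of "p + x"] k_def dist_norm by (simp add: algebra_simps)
  ultimately show "x \<in> (\<Union>k \<in> UNIV \<rightarrow>\<^sub>E {-1, 0, 1}.
            ball ((\<chi> i. of_int (k i)) - p) (r + \<delta>) - ball ((\<chi> i. of_int (k i)) - p) (r - \<delta>))"
    using x unfolding tshell_def by (intro UN_I) (auto simp: dist_commute)
qed

lemma measure_tshell_le:
  fixes p :: "real ^ 'd"
  assumes p: "p \<in> torus_cube" and "0 \<le> r" "0 \<le> \<delta>" "r + \<delta> \<le> R"
  shows "measure lebesgue (tshell p r \<delta>) \<le> tshell_constant CARD('d) R * \<delta>"
proof -
  define K :: "('d \<Rightarrow> int) set" where "K = UNIV \<rightarrow>\<^sub>E {-1, 0, 1}"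
  define A where "A k = ball ((\<chi> i. of_int (k i)) - p) (r + \<delta>) - ball ((\<chi> i. of_int (k i)) - p) (r - \<delta>)"
    for k :: "'d \<Rightarrow> int"
  have fin: "finite K" and card: "card K = 3 ^ CARD('d)"
    unfolding K_def by (simp_all add: finite_PiE card_PiE numeral_3_eq_3)
  have "measure lebesgue (tshell p r \<delta>) \<le> measure lebesgue (\<Union>k\<in>K. A k)"
    using tshell_subset_annuli[OF p] fin unfolding A_def K_def
    by (intro measure_mono_fmeasurable)
       (auto intro!: fmeasurable_UN_bound bounded_set_imp_lmeasurable sets_completionI_sets)
  also have "\<dots> \<le> (\<Sum>k\<in>K. measure lebesgue (A k))"
    using fin unfolding A_def by (intro measure_UNION_le) auto
  also have "\<dots> \<le> (\<Sum>k\<in>K. 2 * CARD('d) * unit_ball_vol CARD('d) * R ^ (CARD('d) - 1) * \<delta>)"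
    unfolding A_def using measure_annulus_le[OF assms(2-4), where 'a = "real ^ 'd"]
    by (intro sum_mono) simp
  finally show ?thesis
    by (simp add: card tshell_constant_def)
qed

section \<open>Second moment of a sum of independent centred variables\<close>

lemma prod_mult_sum_square_eq:
  fixes w Y :: "'i \<Rightarrow> real"
  assumes "finite I"
  shows "(\<Prod>j\<in>I. w j) * (\<Sum>j\<in>I. Y j)\<^sup>2
           = (\<Sum>i\<in>I. \<Sum>k\<in>I. \<Prod>j\<in>I. w j * (if j = i then Y j else 1) * (if j = k then Y j else 1))"
  using assms unfolding prod.distrib power2_eq_square sum_product
  by (simp add: prod.delta sum_distrib_left mult_ac)

text \<open>Read probabilistically: the z j are independent with densities w j and the Y j (z j) are
  centred, so the second moment of their sum is the sum of their variances.\<close>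
lemma PiM_integral_sum_centered_square:
  fixes M :: "'a measure" and w Y :: "'i \<Rightarrow> 'a \<Rightarrow> real"
  assumes M: "sigma_finite_measure M" and I: "finite I"
    and w_int: "\<And>j. j \<in> I \<Longrightarrow> integrable M (w j)"
    and w_norm: "\<And>j. j \<in> I \<Longrightarrow> integral\<^sup>L M (w j) = 1"
    and wY_int: "\<And>j. j \<in> I \<Longrightarrow> integrable M (\<lambda>t. w j t * Y j t)"
    and centered: "\<And>j. j \<in> I \<Longrightarrow> (\<integral>t. w j t * Y j t \<partial>M) = 0"
    and wY2_int: "\<And>j. j \<in> I \<Longrightarrow> integrable M (\<lambda>t. w j t * (Y j t)\<^sup>2)"
  shows "integrable (\<Pi>\<^sub>M j\<in>I. M) (\<lambda>z. (\<Prod>j\<in>I. w j (z j)) * (\<Sum>j\<in>I. Y j (z j))\<^sup>2)"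
    and "(\<integral>z. (\<Prod>j\<in>I. w j (z j)) * (\<Sum>j\<in>I. Y j (z j))\<^sup>2 \<partial>(\<Pi>\<^sub>M j\<in>I. M))
           = (\<Sum>j\<in>I. \<integral>t. w j t * (Y j t)\<^sup>2 \<partial>M)"
proof -
  interpret product_sigma_finite "\<lambda>_. M"
    using M by (simp add: product_sigma_finite_def)
  (* h i k j is the j-th factor of the cross term Y i * Y k; the factor j = i integrates to 0
     unless i = k, by centredness. *)
  define h where "h i k j = (\<lambda>t. w j t * (if j = i then Y j t else 1) * (if j = k then Y j t else 1))"
    for i k j
  have h_int: "integrable M (h i k j)" if "j \<in> I" for i k j
    using that w_int wY_int wY2_int unfolding h_def
    by (cases "j = i"; cases "j = k") (simp_all add: power2_eq_square mult.assoc)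
  have expand: "(\<Prod>j\<in>I. w j (z j)) * (\<Sum>j\<in>I. Y j (z j))\<^sup>2 = (\<Sum>i\<in>I. \<Sum>k\<in>I. \<Prod>j\<in>I. h i k j (z j))"
    for z
    unfolding h_def using prod_mult_sum_square_eq[OF I, of "\<lambda>j. w j (z j)" "\<lambda>j. Y j (z j)"] by simp
  have integral_h: "integral\<^sup>L M (h i k j) = (if j = i \<and> j = k then \<integral>t. w j t * (Y j t)\<^sup>2 \<partial>M
      else if j = i \<or> j = k then 0 else 1)" if "j \<in> I" for i k j
    using that w_norm centered by (auto simp: h_def power2_eq_square mult.assoc)
  have factor: "(\<Prod>j\<in>I. integral\<^sup>L M (h i k j)) = (if i = k then \<integral>t. w i t * (Y i t)\<^sup>2 \<partial>M else 0)"
    if "i \<in> I" "k \<in> I" for i k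
  proof (cases "i = k")
    case True
    then show ?thesis
      using I that by (simp add: integral_h prod.delta cong: prod.cong if_cong)
  next
    case False
    then show ?thesis
      using I that by (simp add: integral_h prod_zero_iff) (metis)
  qed
  show "integrable (\<Pi>\<^sub>M j\<in>I. M) (\<lambda>z. (\<Prod>j\<in>I. w j (z j)) * (\<Sum>j\<in>I. Y j (z j))\<^sup>2)"
    unfolding expand using I h_int by (intro Bochner_Integration.integrable_sum product_integrable_prod) auto
  have "(\<integral>z. (\<Prod>j\<in>I. w j (z j)) * (\<Sum>j\<in>I. Y j (z j))\<^sup>2 \<partial>(\<Pi>\<^sub>M j\<in>I. M))
      = (\<Sum>i\<in>I. \<Sum>k\<in>I. \<Prod>j\<in>I. integral\<^sup>L M (h i k j))"
    unfolding expand using I h_int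
    by (simp add: Bochner_Integration.integrable_sum product_integrable_prod product_integral_prod)
  also have "\<dots> = (\<Sum>j\<in>I. \<integral>t. w j t * (Y j t)\<^sup>2 \<partial>M)"
    using I by (simp add: factor)
  finally show "(\<integral>z. (\<Prod>j\<in>I. w j (z j)) * (\<Sum>j\<in>I. Y j (z j))\<^sup>2 \<partial>(\<Pi>\<^sub>M j\<in>I. M))
           = (\<Sum>j\<in>I. \<integral>t. w j t * (Y j t)\<^sup>2 \<partial>M)" .
qed

lemma integral_weighted_square_le:
  fixes w Y :: "'a \<Rightarrow> real"
  assumes "integrable M w" "integral\<^sup>L M w = 1" "\<And>t. t \<in> space M \<Longrightarrow> 0 \<le> w t"
    and "integrable M (\<lambda>t. w t * (Y t)\<^sup>2)"
    and "\<And>t. t \<in> space M \<Longrightarrow> w t \<noteq> 0 \<Longrightarrow> \<bar>Y t\<bar> \<le> b"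
  shows "(\<integral>t. w t * (Y t)\<^sup>2 \<partial>M) \<le> b\<^sup>2"
proof -
  have "(\<integral>t. w t * (Y t)\<^sup>2 \<partial>M) \<le> (\<integral>t. w t * b\<^sup>2 \<partial>M)"
  proof (intro integral_mono integrable_mult_left assms(1,4))
    fix t assume t: "t \<in> space M"
    show "w t * (Y t)\<^sup>2 \<le> w t * b\<^sup>2"
    proof (cases "w t = 0")
      case False
      then have "(Y t)\<^sup>2 \<le> b\<^sup>2"
        using assms(5)[OF t] by (metis abs_ge_zero power2_abs power_mono)
      then show ?thesis
        using assms(3)[OF t] by (rule mult_left_mono)
    qed simp
  qed
  then show ?thesis
    using assms(2) by simp
qed

lemma abs_diff_weighted_average_le:
  fixes w h :: "'a \<Rightarrow> real"
  assumes "integrable M w" "integral\<^sup>L M w = 1" "\<And>s. s \<in> space M \<Longrightarrow> 0 \<le> w s"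
    and "integrable M (\<lambda>s. w s * h s)"
    and "\<And>s. s \<in> space M \<Longrightarrow> w s \<noteq> 0 \<Longrightarrow> \<bar>c - h s\<bar> \<le> b"
  shows "\<bar>c - (\<integral>s. w s * h s \<partial>M)\<bar> \<le> b"
proof -
  have diff_int: "integrable M (\<lambda>s. w s * (c - h s))"
    using assms(1,4) by (simp add: right_diff_distrib)
  have "c - (\<integral>s. w s * h s \<partial>M) = (\<integral>s. w s * (c - h s) \<partial>M)"
    using assms(1,2,4) by (simp add: right_diff_distrib)
  also have "\<bar>\<dots>\<bar> \<le> (\<integral>s. \<bar>w s * (c - h s)\<bar> \<partial>M)"
    using integral_norm_bound[of M "\<lambda>s. w s * (c - h s)"] by simp
  also have "\<dots> \<le> (\<integral>s. w s * b \<partial>M)"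
  proof (rule integral_mono)
    show "integrable M (\<lambda>s. \<bar>w s * (c - h s)\<bar>)"
      using diff_int by simp
    show "integrable M (\<lambda>s. w s * b)"
      using assms(1) by simp
    fix s assume s: "s \<in> space M"
    show "\<bar>w s * (c - h s)\<bar> \<le> w s * b"
      using assms(3,5)[OF s] by (cases "w s = 0") (simp_all add: abs_mult mult_left_mono)
  qed
  finally show ?thesis
    using assms(2) by simp
qed

section \<open>Oscillation of a Hoelder function cut off by a ball\<close>

lemma continuous_on_holder_tdist:
  fixes f :: "real ^ 'd \<Rightarrow> real"
  assumes "0 < \<beta>" and holder: "\<And>x y. x \<in> S \<Longrightarrow> y \<in> S \<Longrightarrow> \<bar>f x - f y\<bar> \<le> tdist x y powr \<beta>"
  shows "continuous_on S f"
  unfolding continuous_on_iff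
proof (intro ballI allI impI)
  fix x and e :: real assume x: "x \<in> S" and e: "0 < e"
  show "\<exists>d>0. \<forall>y\<in>S. dist y x < d \<longrightarrow> dist (f y) (f x) < e"
  proof (intro exI[of _ "e powr (1/\<beta>)"] conjI ballI impI)
    fix y assume y: "y \<in> S" and d: "dist y x < e powr (1/\<beta>)"
    have "tdist y x \<le> dist y x"
      unfolding tdist_def dist_norm by (rule tnorm_le_norm)
    then have "tdist y x powr \<beta> < (e powr (1/\<beta>)) powr \<beta>"
      using d \<open>0 < \<beta>\<close> by (intro powr_less_mono2) (auto simp: tdist_def tnorm_nonneg)
    moreover have "(e powr (1/\<beta>)) powr \<beta> = e"
      using e \<open>0 < \<beta>\<close> by (simp add: powr_powr)
    ultimately show "dist (f y) (f x) < e"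
      using holder[OF y x] unfolding dist_real_def by linarith
  qed (use e in simp)
qed

lemma holder_le_tdist_zero_bound:
  fixes f :: "real ^ 'd \<Rightarrow> real"
  assumes "0 < \<beta>" "\<beta> \<le> 1" and x: "x \<in> torus_cube"
    and holder: "\<And>x y. x \<in> torus_cube \<Longrightarrow> y \<in> torus_cube \<Longrightarrow> \<bar>f x - f y\<bar> \<le> tdist x y powr \<beta>"
  shows "f x \<le> f 0 + real CARD('d)"
proof -
  have "f x - f 0 \<le> tdist x 0 powr \<beta>"
    using holder[OF x zero_in_torus_cube] by simp
  also have "\<dots> \<le> real CARD('d) powr \<beta>"
    using assms(1) by (intro powr_mono2) (auto simp: tdist_def tnorm_nonneg tnorm_le_card)
  also have "\<dots> \<le> real CARD('d) powr 1"
    using assms(2) by (intro powr_mono) auto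
  finally show ?thesis
    by simp
qed

lemma mem_tshellI:
  fixes t s x p :: "real ^ 'd"
  assumes "t \<in> tball_transl x r" "s \<in> torus_cube - tball_transl x r" "x \<in> torus_cube"
    and "tdist t p \<le> \<delta>" "tdist s p \<le> \<delta>"
  shows "x \<in> tshell p r \<delta>"
proof -
  have tri: "tnorm (a + x) \<le> tnorm (b + x) + tdist a b" for a b :: "real ^ 'd"
    using tnorm_triangle[of "b + x" "a - b"] unfolding tdist_def by (simp add: add.commute)
  have "tnorm (t + x) < r" "r \<le> tnorm (s + x)"
    using assms(1,2) unfolding tball_transl_def by auto
  then show ?thesis
    using tri[of p t] tri[of s p] assms(3-5) unfolding tshell_def
    by (auto simp: tdist_commute[of p])
qed

text \<open>Away from the shell the indicator of the ball is constant on the three points, and only the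
  Hoelder continuity of f contributes.\<close>
lemma abs_diff_indicator_tball_le:
  fixes f :: "real ^ 'd \<Rightarrow> real"
  assumes f: "\<And>y. y \<in> torus_cube \<Longrightarrow> 0 \<le> f y \<and> f y \<le> M"
    and holder: "\<And>x y. x \<in> torus_cube \<Longrightarrow> y \<in> torus_cube \<Longrightarrow> \<bar>f x - f y\<bar> \<le> tdist x y powr \<beta>"
    and "0 \<le> \<beta>" and ts: "t \<in> torus_cube" "s \<in> torus_cube" and x: "x \<in> torus_cube"
    and close: "tdist t s \<le> \<delta>" "tdist t p \<le> \<delta>" "tdist s p \<le> \<delta>"
  shows "\<bar>f t * indicator (tball_transl x r) t - f s * indicator (tball_transl x r) s\<bar>
           \<le> \<delta> powr \<beta> + M * indicator (tshell p r \<delta>) x"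
proof -
  have shell_nonneg: "0 \<le> M * indicator (tshell p r \<delta>) x"
    using f[OF ts(1)] by simp
  consider "t \<in> tball_transl x r \<longleftrightarrow> s \<in> tball_transl x r"
    | "t \<in> tball_transl x r" "s \<in> torus_cube - tball_transl x r"
    | "s \<in> tball_transl x r" "t \<in> torus_cube - tball_transl x r"
    using ts by blast
  then show ?thesis
  proof cases
    case 1
    have "\<bar>f t - f s\<bar> \<le> \<delta> powr \<beta>"
      using holder[OF ts] close(1) \<open>0 \<le> \<beta>\<close> powr_mono2[of \<beta> "tdist t s" \<delta>]
      by (simp add: tdist_def tnorm_nonneg)
    then show ?thesis
      using 1 shell_nonneg by (cases "s \<in> tball_transl x r") auto
  next
    case 2
    then show ?thesis
      using mem_tshellI[OF 2 x close(2,3)] f[OF ts(1)] by (simp add: add_increasing)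
  next
    case 3
    then show ?thesis
      using mem_tshellI[OF 3 x close(3,2)] f[OF ts(2)] by (simp add: add_increasing)
  qed
qed

section \<open>The mean-square discrepancy\<close>

abbreviation torus_measure :: "(real ^ 'd) measure" where
  "torus_measure \<equiv> lebesgue_on torus_cube"

lemma finite_measure_torus_measure: "finite_measure torus_measure"
  by (rule finite_measureI) (simp add: emeasure_restrict_space emeasure_torus_cube)

lemma sigma_finite_measure_torus_measure: "sigma_finite_measure torus_measure"
  using finite_measure_torus_measure finite_measure_def by blast

lemma measure_torus_measure_torus_cube: "measure torus_measure (torus_cube :: (real ^ 'd) set) = 1"
  by (simp add: measure_def emeasure_restrict_space emeasure_torus_cube)

lemma integrable_torus_measure_bounded:
  fixes h :: "real ^ 'd \<Rightarrow> real"
  assumes "h \<in> borel_measurable torus_measure" "\<And>t. t \<in> torus_cube \<Longrightarrow> \<bar>h t\<bar> \<le> B"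
  shows "integrable torus_measure h"
  by (rule finite_measure.integrable_const_bound[OF finite_measure_torus_measure, of _ B])
     (use assms in auto)

lemma measurable_lebesgue_on_borel_id[measurable]:
  "(\<lambda>x. x) \<in> measurable (lebesgue_on S) (borel :: 'a :: euclidean_space measure)"
  using id_borel_measurable_lebesgue_on[of S] by (simp add: id_def)

context
  fixes f :: "real ^ 'd \<Rightarrow> real" and \<beta> M :: real
    and N :: nat and E :: "nat \<Rightarrow> (real ^ 'd) set" and r \<delta> K :: real
  assumes f_bounds: "\<And>x. x \<in> torus_cube \<Longrightarrow> 0 \<le> f x \<and> f x \<le> M"
    and holder: "\<And>x y. x \<in> torus_cube \<Longrightarrow> y \<in> torus_cube \<Longrightarrow> \<bar>f x - f y\<bar> \<le> tdist x y powr \<beta>"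
    and \<beta>: "0 < \<beta>"
    and N: "0 < N"
    and E_lebesgue: "\<And>j. j < N \<Longrightarrow> E j \<in> sets lebesgue"
    and E_subset: "\<And>j. j < N \<Longrightarrow> E j \<subseteq> torus_cube"
    and E_disjoint: "\<And>i j. i < N \<Longrightarrow> j < N \<Longrightarrow> i \<noteq> j \<Longrightarrow> E i \<inter> E j = {}"
    and E_union: "(\<Union>j<N. E j) = torus_cube"
    and E_measure: "\<And>j. j < N \<Longrightarrow> measure lebesgue (E j) = 1 / real N"
    and E_diam: "\<And>j. j < N \<Longrightarrow> tdiam (E j) \<le> \<delta>"
    and shell: "\<And>p :: real ^ 'd. p \<in> torus_cube \<Longrightarrow> measure lebesgue (tshell p r \<delta>) \<le> K * \<delta>"
begin

definition f_ball :: "real ^ 'd \<Rightarrow> real ^ 'd \<Rightarrow> real" where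
  "f_ball x t = f t * indicator (tball_transl x r) t"

lemma f_ball_borel[measurable]:
  "(\<lambda>p. f_ball (fst p) (snd p)) \<in> borel_measurable (borel \<Otimes>\<^sub>M borel)"
proof -
  have "f \<in> borel_measurable (restrict_space borel torus_cube)"
    using continuous_on_holder_tdist[OF \<beta> holder]
    by (rule borel_measurable_continuous_on_restrict)
  then have [measurable]: "(\<lambda>t. indicator torus_cube t * f t) \<in> borel_measurable borel"
    by (subst (asm) borel_measurable_restrict_space_iff) auto
  have "f_ball x t = indicator torus_cube t * f t
          * indicator {q. snd q \<in> torus_cube \<and> tnorm (snd q + fst q) < r} (x, t)" for x t
    unfolding f_ball_def tball_transl_def by (simp add: indicator_def)
  then show ?thesis
    by (simp only:) measurable
qed

lemma f_ball_bounds: "0 \<le> f_ball x t" "f_ball x t \<le> M"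
  using f_bounds[of t] f_bounds[OF zero_in_torus_cube]
  unfolding f_ball_def tball_transl_def by (auto simp: indicator_def)

lemma f_ball_measurable_pair:
  assumes "g \<in> measurable L borel" "h \<in> measurable L borel"
  shows "(\<lambda>w. f_ball (g w) (h w)) \<in> borel_measurable L"
  using measurable_compose[OF measurable_Pair[OF assms] f_ball_borel] by simp

lemma f_ball_measurable_snd: "f_ball x \<in> borel_measurable (lebesgue_on S)"
  by (rule f_ball_measurable_pair) simp_all

lemma f_ball_measurable_fst: "(\<lambda>x. f_ball x t) \<in> borel_measurable (lebesgue_on S)"
  by (rule f_ball_measurable_pair) simp_all

lemma integral_tball_eq_lborel:
  "(LINT y:tball_transl x r|lebesgue. f y) = (\<integral>y. f_ball x y \<partial>lborel)"
proof -
  have "(LINT y:tball_transl x r|lebesgue. f y) = (\<integral>y. f_ball x y \<partial>lebesgue)"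
    unfolding set_lebesgue_integral_def f_ball_def by (simp add: mult.commute)
  also have "\<dots> = (\<integral>y. f_ball x y \<partial>lborel)"
    by (rule integral_completion) (rule f_ball_measurable_pair; simp)
  finally show ?thesis .
qed

lemma integral_tball_borel[measurable]:
  "(\<lambda>x. LINT y:tball_transl x r|lebesgue. f y) \<in> borel_measurable borel"
proof -
  have "(\<lambda>(x, y). f_ball x y) \<in> borel_measurable (borel \<Otimes>\<^sub>M lborel)"
    using f_ball_borel by (simp add: case_prod_beta' cong: measurable_cong_sets)
  then show ?thesis
    unfolding integral_tball_eq_lborel by (rule lborel.borel_measurable_lebesgue_integral)
qed

text \<open>The probability density of the j-th point: N^N times the product of the indicators of the
  E j in Jfun is the product of these densities.\<close>
definition density :: "nat \<Rightarrow> real ^ 'd \<Rightarrow> real" where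
  "density j t = real N * indicator (E j) t"

lemma density_nonneg: "0 \<le> density j t"
  unfolding density_def by simp

lemma E_sets_torus_measure: "j < N \<Longrightarrow> E j \<in> sets torus_measure"
  using E_lebesgue E_subset by (auto simp: sets_restrict_space_iff)

lemma density_borel: "j < N \<Longrightarrow> density j \<in> borel_measurable torus_measure"
  unfolding density_def[abs_def] using E_sets_torus_measure by measurable

lemma integrable_density_mult:
  assumes "j < N" "h \<in> borel_measurable torus_measure" "\<And>t. \<bar>h t\<bar> \<le> B"
  shows "integrable torus_measure (\<lambda>t. density j t * h t)"
proof (rule integrable_torus_measure_bounded)
  show "(\<lambda>t. density j t * h t) \<in> borel_measurable torus_measure"
    using density_borel[OF assms(1)] assms(2) by measurable
  show "\<bar>density j t * h t\<bar> \<le> real N * B" for t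
    using assms(3)[of t] unfolding density_def
    by (cases "t \<in> E j") (auto simp: abs_mult mult_left_mono order_trans[OF _ abs_ge_zero])
qed

lemma integrable_density: "j < N \<Longrightarrow> integrable torus_measure (density j)"
  using integrable_density_mult[of j "\<lambda>_. 1" 1] by simp

lemma integral_density: "j < N \<Longrightarrow> integral\<^sup>L torus_measure (density j) = 1"
proof -
  assume j: "j < N"
  have "measure torus_measure (E j) = 1 / real N"
    using E_measure[OF j] E_subset[OF j] by (subst measure_restrict_space) auto
  moreover have "emeasure torus_measure (E j) < \<infinity>"
    using finite_measure.emeasure_finite[OF finite_measure_torus_measure] by (simp add: less_top)
  ultimately show ?thesis
    using N E_sets_torus_measure[OF j] E_subset[OF j] unfolding density_def
    by (simp add: Int_absorb2)
qed

lemma sum_density: "t \<in> torus_cube \<Longrightarrow> (\<Sum>j<N. density j t) = real N"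
proof -
  assume "t \<in> torus_cube"
  then obtain i where i: "i < N" "t \<in> E i"
    using E_union by auto
  then have "indicator (E j) t = (if j = i then 1 else 0 :: real)" if "j < N" for j
    using E_disjoint[OF that i(1)] by (auto simp: indicator_def)
  then show ?thesis
    using i unfolding density_def by (simp add: sum_distrib_left[symmetric])
qed

definition average :: "nat \<Rightarrow> real ^ 'd \<Rightarrow> real" where
  "average j x = (\<integral>t. density j t * f_ball x t \<partial>torus_measure)"

lemma integrable_density_f_ball: "j < N \<Longrightarrow> integrable torus_measure (\<lambda>t. density j t * f_ball x t)"
  using f_ball_bounds by (intro integrable_density_mult[of _ _ M] f_ball_measurable_snd) auto

lemma integral_tball_eq_mean_average:
  "(LINT y:tball_transl x r|lebesgue. f y) = (\<Sum>j<N. average j x) / real N"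
proof -
  have "(LINT y:tball_transl x r|lebesgue. f y) = (\<integral>t. f_ball x t \<partial>lebesgue)"
    unfolding set_lebesgue_integral_def f_ball_def by (simp add: mult.commute)
  also have "\<dots> = (\<integral>t. f_ball x t \<partial>torus_measure)"
    by (subst integral_restrict_space)
       (auto simp: f_ball_def tball_transl_def indicator_def intro!: Bochner_Integration.integral_cong)
  also have "\<dots> = (\<integral>t. (\<Sum>j<N. density j t * f_ball x t) / real N \<partial>torus_measure)"
    using N by (intro Bochner_Integration.integral_cong) (auto simp: sum_distrib_right[symmetric] sum_density)
  also have "\<dots> = (\<Sum>j<N. average j x) / real N"
    unfolding average_def using integrable_density_f_ball by (simp add: Bochner_Integration.integral_sum)
  finally show ?thesis .
qed

definition center :: "nat \<Rightarrow> real ^ 'd" where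
  "center j = (SOME p. p \<in> E j)"

lemma center_in_E: "j < N \<Longrightarrow> center j \<in> E j"
proof -
  assume j: "j < N"
  have "E j \<noteq> {}"
    using E_measure[OF j] N by auto
  then show ?thesis
    unfolding center_def by (simp add: some_in_eq)
qed

definition oscillation :: "nat \<Rightarrow> real ^ 'd \<Rightarrow> real" where
  "oscillation j x = \<delta> powr \<beta> + M * indicator (tshell (center j) r \<delta>) x"

lemma abs_f_ball_minus_average_le:
  assumes j: "j < N" and x: "x \<in> torus_cube" and t: "t \<in> E j"
  shows "\<bar>f_ball x t - average j x\<bar> \<le> oscillation j x"
  unfolding average_def
proof (rule abs_diff_weighted_average_le)
  fix s assume "s \<in> space torus_measure" "density j s \<noteq> 0"
  then have s: "s \<in> E j"
    by (simp add: density_def indicator_def split: if_splits)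
  have close: "tdist a b \<le> \<delta>" if "a \<in> E j" "b \<in> E j" for a b
    using tdist_le_tdiam[OF that] E_diam[OF j] by simp
  show "\<bar>f_ball x t - f_ball x s\<bar> \<le> oscillation j x"
    unfolding f_ball_def oscillation_def
    using E_subset[OF j] t s center_in_E[OF j] \<beta>
    by (intro abs_diff_indicator_tball_le[OF f_bounds holder] close x) auto
qed (use j in \<open>simp_all add: integral_density integrable_density integrable_density_f_ball density_nonneg\<close>)

definition discrepancy :: "real ^ 'd \<Rightarrow> (nat \<Rightarrow> real ^ 'd) \<Rightarrow> real" where
  "discrepancy x z = (1 / real N) * (\<Sum>j<N. f_ball x (z j)) - (LINT y:tball_transl x r|lebesgue. f y)"

lemma discrepancy_eq_sum_centered:
  "discrepancy x z = (\<Sum>j<N. f_ball x (z j) - average j x) / real N"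
  unfolding discrepancy_def integral_tball_eq_mean_average by (simp add: sum_subtractf diff_divide_distrib)

definition fluctuation :: "nat \<Rightarrow> real ^ 'd \<Rightarrow> real ^ 'd \<Rightarrow> real" where
  "fluctuation j x t = f_ball x t - average j x"

lemma fluctuation_borel: "fluctuation j x \<in> borel_measurable torus_measure"
  unfolding fluctuation_def[abs_def] using f_ball_measurable_snd by measurable

lemma abs_fluctuation_le: "\<bar>fluctuation j x t\<bar> \<le> M + \<bar>average j x\<bar>"
  unfolding fluctuation_def using f_ball_bounds[of x t] by linarith

lemma integrable_density_fluctuation:
  assumes "j < N"
  shows "integrable torus_measure (\<lambda>t. density j t * fluctuation j x t)"
    and "integrable torus_measure (\<lambda>t. density j t * (fluctuation j x t)\<^sup>2)"
proof -
  show "integrable torus_measure (\<lambda>t. density j t * fluctuation j x t)"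
    using assms fluctuation_borel abs_fluctuation_le by (rule integrable_density_mult)
  show "integrable torus_measure (\<lambda>t. density j t * (fluctuation j x t)\<^sup>2)"
  proof (rule integrable_density_mult[OF assms])
    show "(\<lambda>t. (fluctuation j x t)\<^sup>2) \<in> borel_measurable torus_measure"
      using fluctuation_borel by measurable
    show "\<bar>(fluctuation j x t)\<^sup>2\<bar> \<le> (M + \<bar>average j x\<bar>)\<^sup>2" for t
      using power_mono[OF abs_fluctuation_le[of j x t] abs_ge_zero, of 2] by simp
  qed
qed

lemma integral_density_fluctuation: "j < N \<Longrightarrow> (\<integral>t. density j t * fluctuation j x t \<partial>torus_measure) = 0"
  using integrable_density_f_ball integrable_density integral_density
  by (simp add: fluctuation_def right_diff_distrib average_def[symmetric])

lemma integral_density_fluctuation_square_le: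
  assumes j: "j < N" and x: "x \<in> torus_cube"
  shows "(\<integral>t. density j t * (fluctuation j x t)\<^sup>2 \<partial>torus_measure) \<le> (oscillation j x)\<^sup>2"
proof (rule integral_weighted_square_le)
  fix t assume "density j t \<noteq> 0"
  then have "t \<in> E j"
    by (simp add: density_def indicator_def split: if_splits)
  then show "\<bar>fluctuation j x t\<bar> \<le> oscillation j x"
    unfolding fluctuation_def by (rule abs_f_ball_minus_average_le[OF j x])
qed (use j in \<open>simp_all add: integrable_density integral_density density_nonneg
                              integrable_density_fluctuation\<close>)

lemma integral_discrepancy_square_le:
  assumes x: "x \<in> torus_cube"
  shows "integrable (\<Pi>\<^sub>M j\<in>{..<N}. torus_measure)
           (\<lambda>z. (\<Prod>j<N. indicator (E j) (z j)) * (discrepancy x z)\<^sup>2)"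
    and "(\<integral>z. (\<Prod>j<N. indicator (E j) (z j)) * (discrepancy x z)\<^sup>2 \<partial>(\<Pi>\<^sub>M j\<in>{..<N}. torus_measure))
           \<le> (1 / real N) ^ N * ((\<Sum>j<N. (oscillation j x)\<^sup>2) / (real N)\<^sup>2)"
proof -
  have rescale: "(\<Prod>j<N. indicator (E j) (z j)) * (discrepancy x z)\<^sup>2
      = (1 / real N) ^ N * ((\<Prod>j<N. density j (z j)) * (\<Sum>j<N. fluctuation j x (z j))\<^sup>2 / (real N)\<^sup>2)"
    for z
    using N unfolding discrepancy_eq_sum_centered fluctuation_def density_def
    by (simp add: prod.distrib power_divide field_simps)
  note sum_square = PiM_integral_sum_centered_square[OF sigma_finite_measure_torus_measure,
      of "{..<N}" density "\<lambda>j. fluctuation j x", OF _ integrable_density integral_density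
      integrable_density_fluctuation(1) integral_density_fluctuation integrable_density_fluctuation(2)]
  show "integrable (\<Pi>\<^sub>M j\<in>{..<N}. torus_measure)
           (\<lambda>z. (\<Prod>j<N. indicator (E j) (z j)) * (discrepancy x z)\<^sup>2)"
    unfolding rescale using sum_square(1) by simp
  have "(\<Sum>j<N. \<integral>t. density j t * (fluctuation j x t)\<^sup>2 \<partial>torus_measure) \<le> (\<Sum>j<N. (oscillation j x)\<^sup>2)"
    using integral_density_fluctuation_square_le[OF _ x] by (intro sum_mono) simp
  then show "(\<integral>z. (\<Prod>j<N. indicator (E j) (z j)) * (discrepancy x z)\<^sup>2 \<partial>(\<Pi>\<^sub>M j\<in>{..<N}. torus_measure))
           \<le> (1 / real N) ^ N * ((\<Sum>j<N. (oscillation j x)\<^sup>2) / (real N)\<^sup>2)"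
    unfolding rescale using sum_square by (auto intro!: divide_right_mono mult_left_mono)
qed

lemma nn_integral_discrepancy_square_le:
  assumes x: "x \<in> torus_cube"
  shows "(\<integral>\<^sup>+ z. (\<Prod>j<N. indicator (E j) (z j)) * ennreal ((discrepancy x z)\<^sup>2) \<partial>(\<Pi>\<^sub>M j\<in>{..<N}. torus_measure))
           \<le> ennreal ((1 / real N) ^ N * ((\<Sum>j<N. (oscillation j x)\<^sup>2) / (real N)\<^sup>2))"
proof -
  have "(\<Prod>j<N. indicator (E j) (z j)) * ennreal ((discrepancy x z)\<^sup>2)
      = ennreal ((\<Prod>j<N. indicator (E j) (z j)) * (discrepancy x z)\<^sup>2)" for z
    by (simp add: prod_ennreal[symmetric] ennreal_indicator ennreal_mult' prod_nonneg)
  then have "(\<integral>\<^sup>+ z. (\<Prod>j<N. indicator (E j) (z j)) * ennreal ((discrepancy x z)\<^sup>2) \<partial>(\<Pi>\<^sub>M j\<in>{..<N}. torus_measure))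
      = ennreal (\<integral>z. (\<Prod>j<N. indicator (E j) (z j)) * (discrepancy x z)\<^sup>2 \<partial>(\<Pi>\<^sub>M j\<in>{..<N}. torus_measure))"
    using integral_discrepancy_square_le(1)[OF x] by (simp add: nn_integral_eq_integral prod_nonneg)
  also have "\<dots> \<le> ennreal ((1 / real N) ^ N * ((\<Sum>j<N. (oscillation j x)\<^sup>2) / (real N)\<^sup>2))"
    using integral_discrepancy_square_le(2)[OF x] by (rule ennreal_leI)
  finally show ?thesis .
qed

lemma discrepancy_measurable:
  "(\<lambda>w. discrepancy (fst w) (snd w))
     \<in> borel_measurable (torus_measure \<Otimes>\<^sub>M (\<Pi>\<^sub>M j\<in>{..<N}. torus_measure))"
  unfolding discrepancy_def
proof (intro borel_measurable_diff borel_measurable_times borel_measurable_const borel_measurable_sum)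
  show "(\<lambda>w. LINT y:tball_transl (fst w) r|lebesgue. f y)
      \<in> borel_measurable (torus_measure \<Otimes>\<^sub>M (\<Pi>\<^sub>M j\<in>{..<N}. torus_measure))"
    by measurable
  show "(\<lambda>w. f_ball (fst w) (snd w j))
      \<in> borel_measurable (torus_measure \<Otimes>\<^sub>M (\<Pi>\<^sub>M j\<in>{..<N}. torus_measure))" if "j \<in> {..<N}" for j
    using that by (intro f_ball_measurable_pair) measurable
qed

lemma discrepancy_measurable_fst: "(\<lambda>x. discrepancy x z) \<in> borel_measurable torus_measure"
  unfolding discrepancy_def using f_ball_measurable_fst by measurable

lemma oscillation_measurable: "oscillation j \<in> borel_measurable torus_measure"
  unfolding oscillation_def[abs_def] by measurable

lemma pair_sigma_finite_torus_measure_PiM: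
  assumes "finite I"
  shows "pair_sigma_finite torus_measure (\<Pi>\<^sub>M j\<in>I. torus_measure :: (real ^ 'd) measure)"
proof -
  have "sigma_finite_measure (\<Pi>\<^sub>M j\<in>I. torus_measure :: (real ^ 'd) measure)"
    using assms by (intro product_sigma_finite.sigma_finite)
      (simp_all add: product_sigma_finite_def sigma_finite_measure_torus_measure)
  then show ?thesis
    using sigma_finite_measure_torus_measure pair_sigma_finite_def by blast
qed

lemma Jfun_eq_iterated_integral:
  "Jfun N E f r = ennreal (real N ^ N) *
     (\<integral>\<^sup>+ x. \<integral>\<^sup>+ z. (\<Prod>j<N. indicator (E j) (z j)) * ennreal ((discrepancy x z)\<^sup>2)
        \<partial>(\<Pi>\<^sub>M j\<in>{..<N}. torus_measure) \<partial>torus_measure)"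
proof -
  let ?P = "\<Pi>\<^sub>M j\<in>{..<N}. (torus_measure :: (real ^ 'd) measure)"
  let ?I = "\<lambda>z. \<Prod>j<N. (indicator (E j) (z j) :: ennreal)"
  have "Jfun N E f r
      = ennreal (real N ^ N) * (\<integral>\<^sup>+ z. ?I z * (\<integral>\<^sup>+ x. ennreal ((discrepancy x z)\<^sup>2) \<partial>torus_measure) \<partial>?P)"
    unfolding Jfun_def discrepancy_def f_ball_def by simp
  also have "\<dots> = ennreal (real N ^ N) * (\<integral>\<^sup>+ z. \<integral>\<^sup>+ x. ?I z * ennreal ((discrepancy x z)\<^sup>2) \<partial>torus_measure \<partial>?P)"
    using discrepancy_measurable_fst by (simp add: nn_integral_cmult)
  also have "(\<integral>\<^sup>+ z. \<integral>\<^sup>+ x. ?I z * ennreal ((discrepancy x z)\<^sup>2) \<partial>torus_measure \<partial>?P)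
      = (\<integral>\<^sup>+ x. \<integral>\<^sup>+ z. ?I z * ennreal ((discrepancy x z)\<^sup>2) \<partial>?P \<partial>torus_measure)"
  proof (rule pair_sigma_finite.Fubini'[OF pair_sigma_finite_torus_measure_PiM])
    show "(\<lambda>(x, z). ?I z * ennreal ((discrepancy x z)\<^sup>2)) \<in> borel_measurable (torus_measure \<Otimes>\<^sub>M ?P)"
      using discrepancy_measurable E_sets_torus_measure by measurable
  qed simp
  finally show ?thesis .
qed

lemma Jfun_le_integral_oscillation:
  "Jfun N E f r \<le> (\<integral>\<^sup>+ x. ennreal ((\<Sum>j<N. (oscillation j x)\<^sup>2) / (real N)\<^sup>2) \<partial>torus_measure)"
proof -
  let ?V = "\<lambda>x. (\<Sum>j<N. (oscillation j x)\<^sup>2) / (real N)\<^sup>2"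
  have "Jfun N E f r \<le> ennreal (real N ^ N) * (\<integral>\<^sup>+ x. ennreal ((1 / real N) ^ N * ?V x) \<partial>torus_measure)"
    unfolding Jfun_eq_iterated_integral using nn_integral_discrepancy_square_le
    by (intro mult_left_mono nn_integral_mono) simp_all
  also have "(\<integral>\<^sup>+ x. ennreal ((1 / real N) ^ N * ?V x) \<partial>torus_measure)
      = ennreal ((1 / real N) ^ N) * (\<integral>\<^sup>+ x. ennreal (?V x) \<partial>torus_measure)"
  proof -
    have "ennreal ((1 / real N) ^ N * ?V x) = ennreal ((1 / real N) ^ N) * ennreal (?V x)" for x
      by (rule ennreal_mult) (simp_all add: sum_nonneg)
    then show ?thesis
      by (simp only:)
         (intro nn_integral_cmult measurable_compose[OF _ measurable_ennreal] borel_measurable_divide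
           borel_measurable_sum borel_measurable_power oscillation_measurable borel_measurable_const)
  qed
  also have "ennreal (real N ^ N) * (ennreal ((1 / real N) ^ N) * (\<integral>\<^sup>+ x. ennreal (?V x) \<partial>torus_measure))
      = (\<integral>\<^sup>+ x. ennreal (?V x) \<partial>torus_measure)"
    using N by (simp add: mult.assoc[symmetric] ennreal_mult[symmetric] power_mult_distrib[symmetric])
  finally show ?thesis .
qed

lemma integral_oscillation_square:
  assumes j: "j < N"
  shows "integrable torus_measure (\<lambda>x. 2 * \<delta> powr (2 * \<beta>) + 2 * M\<^sup>2 * indicator (tshell (center j) r \<delta>) x)"
    and "(\<integral>x. 2 * \<delta> powr (2 * \<beta>) + 2 * M\<^sup>2 * indicator (tshell (center j) r \<delta>) x \<partial>torus_measure)
           \<le> 2 * \<delta> powr (2 * \<beta>) + 2 * M\<^sup>2 * (K * \<delta>)"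
proof -
  let ?S = "tshell (center j) r \<delta>"
  have S: "?S \<in> sets torus_measure" "?S \<inter> torus_cube = ?S"
    using tshell_subset_torus_cube by (auto simp: sets_restrict_space_iff)
  have finite: "emeasure torus_measure ?S < \<infinity>"
    using finite_measure.emeasure_finite[OF finite_measure_torus_measure] by (simp add: less_top)
  show int: "integrable torus_measure (\<lambda>x. 2 * \<delta> powr (2 * \<beta>) + 2 * M\<^sup>2 * indicator ?S x)"
    using S finite
    by (intro Bochner_Integration.integrable_add integrable_mult_right integrable_real_indicator
        finite_measure.integrable_const[OF finite_measure_torus_measure]) auto
  have "(\<integral>x. 2 * \<delta> powr (2 * \<beta>) + 2 * M\<^sup>2 * indicator ?S x \<partial>torus_measure)
      = 2 * \<delta> powr (2 * \<beta>) * measure torus_measure (torus_cube :: (real ^ 'd) set) + 2 * M\<^sup>2 * measure torus_measure ?S"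
    using S finite by (simp add: finite_measure.integrable_const[OF finite_measure_torus_measure])
  also have "measure torus_measure ?S = measure lebesgue ?S"
    using tshell_subset_torus_cube by (intro measure_restrict_space) auto
  also have "\<dots> \<le> K * \<delta>"
    using shell[of "center j"] center_in_E[OF j] E_subset[OF j] by auto
  finally show "(\<integral>x. 2 * \<delta> powr (2 * \<beta>) + 2 * M\<^sup>2 * indicator ?S x \<partial>torus_measure)
           \<le> 2 * \<delta> powr (2 * \<beta>) + 2 * M\<^sup>2 * (K * \<delta>)"
    by (simp add: measure_torus_measure_torus_cube mult_left_mono)
qed

lemma integral_oscillation_le:
  "(\<integral>\<^sup>+ x. ennreal ((\<Sum>j<N. (oscillation j x)\<^sup>2) / (real N)\<^sup>2) \<partial>torus_measure)
     \<le> ennreal ((2 * \<delta> powr (2 * \<beta>) + 2 * M\<^sup>2 * K * \<delta>) / real N)"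
proof -
  define B where "B j x = 2 * \<delta> powr (2 * \<beta>) + 2 * M\<^sup>2 * indicator (tshell (center j) r \<delta>) x"
    for j x
  have square_sum: "(a + b)\<^sup>2 \<le> 2 * a\<^sup>2 + 2 * b\<^sup>2" for a b :: real
    using zero_le_power2[of "a - b"] by (simp add: power2_eq_square algebra_simps)
  have "(oscillation j x)\<^sup>2 \<le> B j x" for j x
  proof -
    have "(oscillation j x)\<^sup>2 \<le> 2 * (\<delta> powr \<beta>)\<^sup>2 + 2 * (M * indicator (tshell (center j) r \<delta>) x)\<^sup>2"
      unfolding oscillation_def by (rule square_sum)
    also have "\<dots> = B j x"
      unfolding B_def by (simp add: powr_powr[symmetric] power2_eq_square powr_add[symmetric]
          power_mult_distrib indicator_def)
    finally show ?thesis .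
  qed
  then have "(\<integral>\<^sup>+ x. ennreal ((\<Sum>j<N. (oscillation j x)\<^sup>2) / (real N)\<^sup>2) \<partial>torus_measure)
      \<le> (\<integral>\<^sup>+ x. ennreal ((\<Sum>j<N. B j x) / (real N)\<^sup>2) \<partial>torus_measure)"
    by (intro nn_integral_mono ennreal_leI divide_right_mono sum_mono) auto
  also have "\<dots> = ennreal (\<integral>x. (\<Sum>j<N. B j x) / (real N)\<^sup>2 \<partial>torus_measure)"
  proof (rule nn_integral_eq_integral)
    show "integrable torus_measure (\<lambda>x. (\<Sum>j<N. B j x) / (real N)\<^sup>2)"
      using integral_oscillation_square(1) unfolding B_def
      by (intro integrable_divide_zero Bochner_Integration.integrable_sum) auto
  qed (simp add: B_def sum_nonneg)
  also have "(\<integral>x. (\<Sum>j<N. B j x) / (real N)\<^sup>2 \<partial>torus_measure)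
      = (\<Sum>j<N. \<integral>x. B j x \<partial>torus_measure) / (real N)\<^sup>2"
    using integral_oscillation_square(1) unfolding B_def by (simp add: Bochner_Integration.integral_sum)
  also have "\<dots> \<le> (\<Sum>j<N. 2 * \<delta> powr (2 * \<beta>) + 2 * M\<^sup>2 * (K * \<delta>)) / (real N)\<^sup>2"
    using integral_oscillation_square(2) unfolding B_def by (intro divide_right_mono sum_mono) auto
  also have "\<dots> = (2 * \<delta> powr (2 * \<beta>) + 2 * M\<^sup>2 * K * \<delta>) / real N"
    using N by (simp add: power2_eq_square mult.assoc)
  finally show ?thesis
    by (simp add: ennreal_leI)
qed

lemma Jfun_le_shell_bound:
  "Jfun N E f r \<le> ennreal ((2 * \<delta> powr (2 * \<beta>) + 2 * M\<^sup>2 * K * \<delta>) / real N)"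
  using Jfun_le_integral_oscillation integral_oscillation_le by (rule order_trans)

end

lemma powr_rate_bound:
  fixes n d \<kappa> \<beta> A B :: real
  assumes n: "1 \<le> n" and d: "1 \<le> d" and "0 < \<kappa>" "0 \<le> A" "0 \<le> B"
  shows "(A * (\<kappa> * n powr (-1 / d)) powr (2 * \<beta>) + B * (\<kappa> * n powr (-1 / d))) / n
           \<le> (A * \<kappa> powr (2 * \<beta>) + B * \<kappa>)
              * (if \<beta> < 1/2 then n powr (-1 - 2 * \<beta> / d) else n powr (-1 - 1 / d))"
proof -
  define X1 where "X1 = n powr (-1 - 2 * \<beta> / d)"
  define X2 where "X2 = n powr (-1 - 1 / d)"
  have "n powr (-1 - a) = n powr (- a) / n" for a
    using n by (simp add: powr_diff powr_minus divide_inverse)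
  then have split: "(A * (\<kappa> * n powr (-1 / d)) powr (2 * \<beta>) + B * (\<kappa> * n powr (-1 / d))) / n
      = A * \<kappa> powr (2 * \<beta>) * X1 + B * \<kappa> * X2"
    using n \<open>0 < \<kappa>\<close> unfolding X1_def X2_def
    by (simp add: powr_mult powr_powr add_divide_distrib)
  have "X2 \<le> X1" if "\<beta> < 1/2"
    unfolding X1_def X2_def using that n d by (intro powr_mono) (auto simp: divide_right_mono)
  moreover have "X1 \<le> X2" if "\<not> \<beta> < 1/2"
    unfolding X1_def X2_def using that n d by (intro powr_mono) (auto simp: divide_right_mono)
  ultimately show ?thesis
    unfolding split X1_def[symmetric] X2_def[symmetric] using assms
    by (auto simp: distrib_right intro!: add_mono mult_left_mono)
qed

lemma Jfun_le_rate:
  fixes f :: "real ^ 'd \<Rightarrow> real"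
  assumes f_bounds: "\<And>x. x \<in> torus_cube \<Longrightarrow> 0 \<le> f x \<and> f x \<le> M"
    and holder: "\<And>x y. x \<in> torus_cube \<Longrightarrow> y \<in> torus_cube \<Longrightarrow> \<bar>f x - f y\<bar> \<le> tdist x y powr \<beta>"
    and \<beta>: "0 < \<beta>" and \<kappa>: "0 < \<kappa>" and N: "0 < N"
    and partition: "\<And>j. j < N \<Longrightarrow> E j \<in> sets lebesgue" "\<And>j. j < N \<Longrightarrow> E j \<subseteq> torus_cube"
      "\<And>i j. i < N \<Longrightarrow> j < N \<Longrightarrow> i \<noteq> j \<Longrightarrow> E i \<inter> E j = {}" "(\<Union>j<N. E j) = torus_cube"
      "\<And>j. j < N \<Longrightarrow> measure lebesgue (E j) = 1 / real N"
    and diam: "\<And>j. j < N \<Longrightarrow> tdiam (E j) \<le> \<kappa> * real N powr (-1 / real CARD('d))"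
    and r: "0 < r" "r < 1/2"
  shows "Jfun N E f r \<le> ennreal ((2 * \<kappa> powr (2 * \<beta>) + 2 * M\<^sup>2 * tshell_constant CARD('d) (1/2 + \<kappa>) * \<kappa>)
           * (if \<beta> < 1/2 then real N powr (-1 - 2 * \<beta> / real CARD('d))
              else real N powr (-1 - 1 / real CARD('d))))"
proof -
  define \<delta> where "\<delta> = \<kappa> * real N powr (-1 / real CARD('d))"
  define K where "K = tshell_constant CARD('d) (1/2 + \<kappa>)"
  have "real N powr (-1 / real CARD('d)) \<le> 1"
    using N powr_mono[of "-1 / real CARD('d)" 0 "real N"] by simp
  then have \<delta>: "0 \<le> \<delta>" "\<delta> \<le> \<kappa>"
    unfolding \<delta>_def using \<kappa> by (auto intro: mult_left_le)
  have shell: "measure lebesgue (tshell p r \<delta>) \<le> K * \<delta>" if "p \<in> torus_cube" for p :: "real ^ 'd"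
    unfolding K_def using measure_tshell_le[OF that _ \<delta>(1), of r "1/2 + \<kappa>"] r \<delta> by simp
  have "Jfun N E f r \<le> ennreal ((2 * \<delta> powr (2 * \<beta>) + 2 * M\<^sup>2 * K * \<delta>) / real N)"
    by (rule Jfun_le_shell_bound[OF f_bounds holder \<beta> N partition diam[folded \<delta>_def] shell])
  also have "\<dots> \<le> ennreal ((2 * \<kappa> powr (2 * \<beta>) + 2 * M\<^sup>2 * K * \<kappa>)
                 * (if \<beta> < 1/2 then real N powr (-1 - 2 * \<beta> / real CARD('d))
                    else real N powr (-1 - 1 / real CARD('d))))"
    using powr_rate_bound[of "real N" "real CARD('d)" \<kappa> 2 "2 * M\<^sup>2 * K" \<beta>] N \<kappa>
      tshell_constant_nonneg[of "1/2 + \<kappa>" "CARD('d)"]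
    unfolding \<delta>_def[symmetric] K_def by (intro ennreal_leI) simp
  finally show ?thesis
    unfolding K_def .
qed

theorem theorem10:
  fixes f :: "real ^ 'd \<Rightarrow> real" and \<kappa>1 \<kappa>2 \<beta> :: real
  assumes "0 < \<kappa>1" and "\<kappa>1 \<le> \<kappa>2"
    and "0 < \<beta>" and "\<beta> \<le> 1"
    and "\<forall>x\<in>torus_cube. 0 \<le> f x"
    and "\<forall>x\<in>torus_cube. \<forall>y\<in>torus_cube. \<bar>f x - f y\<bar> \<le> tdist x y powr \<beta>"
  shows "\<exists>c>0. \<forall>(N::nat) (E :: nat \<Rightarrow> (real ^ 'd) set) r.
           0 < N \<longrightarrow>
           (\<forall>j<N. E j \<in> sets lebesgue \<and> E j \<subseteq> torus_cube) \<longrightarrow>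
           (\<forall>i<N. \<forall>j<N. i \<noteq> j \<longrightarrow> E i \<inter> E j = {}) \<longrightarrow>
           (\<Union>j<N. E j) = torus_cube \<longrightarrow>
           (\<forall>j<N. measure lebesgue (E j) = 1 / real N) \<longrightarrow>
           (\<forall>j<N. \<kappa>1 * real N powr (-1 / real CARD('d)) \<le> tdiam (E j)
                  \<and> tdiam (E j) \<le> \<kappa>2 * real N powr (-1 / real CARD('d))) \<longrightarrow>
           0 < r \<longrightarrow> r < 1/2 \<longrightarrow>
           Jfun N E f r \<le> ennreal (c * (if \<beta> < 1/2
                                      then real N powr (-1 - 2 * \<beta> / real CARD('d))
                                      else real N powr (-1 - 1 / real CARD('d))))"
proof -
  have \<kappa>2: "0 < \<kappa>2"
    using assms(1,2) by linarith
  have holder: "\<And>x y. x \<in> torus_cube \<Longrightarrow> y \<in> torus_cube \<Longrightarrow> \<bar>f x - f y\<bar> \<le> tdist x y powr \<beta>"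
    using assms(6) by blast
  define M where "M = f 0 + real CARD('d)"
  have f_bounds: "0 \<le> f x \<and> f x \<le> M" if "x \<in> torus_cube" for x
    using assms(5) holder_le_tdist_zero_bound[OF assms(3,4) that holder] that unfolding M_def by blast
  define c where "c = 2 * \<kappa>2 powr (2 * \<beta>) + 2 * M\<^sup>2 * tshell_constant CARD('d) (1/2 + \<kappa>2) * \<kappa>2"
  have "0 \<le> c"
    unfolding c_def using \<kappa>2 tshell_constant_nonneg[of "1/2 + \<kappa>2" "CARD('d)"] by simp
  show ?thesis
  proof (intro exI[of _ "c + 1"] conjI allI impI)
    fix N :: nat and E :: "nat \<Rightarrow> (real ^ 'd) set" and r :: real
    let ?rate = "if \<beta> < 1/2 then real N powr (-1 - 2 * \<beta> / real CARD('d))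
                 else real N powr (-1 - 1 / real CARD('d))"
    assume "0 < N" "\<forall>j<N. E j \<in> sets lebesgue \<and> E j \<subseteq> torus_cube"
      "\<forall>i<N. \<forall>j<N. i \<noteq> j \<longrightarrow> E i \<inter> E j = {}" "(\<Union>j<N. E j) = torus_cube"
      "\<forall>j<N. measure lebesgue (E j) = 1 / real N"
      "\<forall>j<N. \<kappa>1 * real N powr (-1 / real CARD('d)) \<le> tdiam (E j)
                  \<and> tdiam (E j) \<le> \<kappa>2 * real N powr (-1 / real CARD('d))"
      "0 < r" "r < 1/2"
    then have "Jfun N E f r \<le> ennreal (c * ?rate)"
      unfolding c_def by (intro Jfun_le_rate[OF f_bounds holder assms(3) \<kappa>2]) auto
    also have "\<dots> \<le> ennreal ((c + 1) * ?rate)"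
      by (intro ennreal_leI mult_right_mono) simp_all
    finally show "Jfun N E f r \<le> ennreal ((c + 1) * ?rate)" .
  qed (use \<open>0 \<le> c\<close> in simp)
qed

end
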